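(* Assume (A1)–(A3), that $f$ is convex, and that $\theta^\star\in\mathbb R^d$ is a global minimizer of $f$; let $f^\star=f(\theta^\star)$. Let $(\theta_t)$ be generated by mini-batch SGD with batch sizes $b_t\in\mathbb N$ and learning rates $\eta_t\in[\eta_{\min},\eta_{\max}]\subset[0,\frac2{\bar L})$, and let $T\in\mathbb N$ with $\sum_{t=0}^{T-1}\eta_t\ne0$. Then $$\min_{t\in[0:T-1]}\mathbb E[f(\theta_t)-f^\star]\le\Big(\frac{\|\theta_0-\theta^\star\|^2}{2}+\frac{\eta_{\max}(f(\theta_0)-\underline f^\star)}{2-\bar L\eta_{\max}}\Big)\frac1{\sum_{t=0}^{T-1}\eta_t}+\frac{\sigma^2}{2}\Big(1+\frac{\bar L\eta_{\max}}{2-\bar L\eta_{\max}}\Big)\frac{\sum_{t=0}^{T-1}\eta_t^2b_t^{-1}}{\sum_{t=0}^{T-1}\eta_t}.$$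
   Context: Let $f_1,\dots,f_n:\mathbb R^d\to\mathbb R$, $f=\frac1n\sum_{i=1}^nf_i$. (A1) each $f_i$ is differentiable and $L_i$-smooth ($\|\nabla f_i(\theta_1)-\nabla f_i(\theta_2)\|\le L_i\|\theta_1-\theta_2\|$, $L_i>0$), and $f_i^\star:=\inf_\theta f_i(\theta)\in\mathbb R$. (A2) $\xi$ is a random variable independent of $\theta$, and the stochastic gradient $\nabla f_\xi$ satisfies $\mathbb E_\xi[\nabla f_\xi(\theta)]=\nabla f(\theta)$ and $\mathbb E_\xi\|\nabla f_\xi(\theta)-\nabla f(\theta)\|^2\le\sigma^2$ for all $\theta$, some $\sigma\ge0$. (A3) for batch size $b$, $(\xi_1,\dots,\xi_b)$ are i.i.d. copies of $\xi$ independent of $\theta$, and $\nabla f_B(\theta)=\frac1b\sum_{i=1}^b\nabla f_{\xi_i}(\theta)$. Mini-batch SGD: from $\theta_0\in\mathbb R^d$, at step $t$ draw $\xi_t=(\xi_{t,1},\dots,\xi_{t,b_t})$ as in (A3), independent of $\theta_t$ and of earlier draws, and set $\theta_{t+1}=\theta_t-\eta_t\frac1{b_t}\sum_{i=1}^{b_t}\nabla f_{\xi_{t,i}}(\theta_t)$. $\mathbb E$ is total expectation over $\xi_0,\xi_1,\dots$. $\bar L=\frac1n\sum_iL_i$, $\underline f^\star=\frac1n\sum_if_i^\star$, $[0:N]=\{0,\dots,N\}$. *)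

theory Defs
  imports "HOL-Probability.Probability"
begin

definition avg_fun :: "nat \<Rightarrow> (nat \<Rightarrow> 'a \<Rightarrow> real) \<Rightarrow> 'a \<Rightarrow> real" where
  "avg_fun n fs = (\<lambda>x. (\<Sum>i<n. fs i x) / real n)"

definition avg_inf :: "nat \<Rightarrow> (nat \<Rightarrow> 'a \<Rightarrow> real) \<Rightarrow> real" where
  "avg_inf n fs = (\<Sum>i<n. Inf (range (fs i))) / real n"

end

theory Submission
  imports Defs
begin

(* Two one-step inequalities, each obtained by averaging over the batch drawn at step t with
   theta_t held fixed, drive the bound. Convexity of f and unbiasedness of the mini-batch gradient,
   whose variance is at most sigma^2 / b_t by independence of the draws, give
     E|theta_{t+1} - theta*|^2 + 2 eta_t E[f(theta_t) - f*]
       <= E|theta_t - theta*|^2 + eta_t^2 E|grad f(theta_t)|^2 + eta_t^2 sigma^2 / b_t,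
   and the descent lemma for f, which is L-smooth with L the mean of the L_i, gives
     E[f(theta_{t+1}) - f_low] + eta_t (1 - L eta_t / 2) E|grad f(theta_t)|^2
       <= E[f(theta_t) - f_low] + L eta_t^2 sigma^2 / (2 b_t).
   As eta_t <= eta_max < 2 / L, telescoping the second inequality bounds the weighted gradient sum
   sum_t eta_t E|grad f(theta_t)|^2 that the first one needs; telescoping the first then bounds
   sum_t eta_t E[f(theta_t) - f*], which dominates the minimum times sum_t eta_t. *)

lemma has_real_derivative_along_line:
  fixes f :: "'a::real_inner \<Rightarrow> real"
  assumes deriv: "\<And>x. (f has_derivative (\<lambda>h. g x \<bullet> h)) (at x)"
  shows "((\<lambda>s. f (x + s *\<^sub>R v)) has_real_derivative g (x + s *\<^sub>R v) \<bullet> v) (at s within A)"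
proof -
  have "((\<lambda>s. x + s *\<^sub>R v) has_derivative (\<lambda>h. h *\<^sub>R v)) (at s within A)"
    by (auto intro!: derivative_eq_intros)
  from has_derivative_compose[OF this has_derivative_at_withinI[OF deriv]]
  show ?thesis
    by (rule has_derivative_imp_has_field_derivative) (simp add: inner_scaleR_right mult.commute)
qed

lemma lipschitz_gradient_upper_bound:
  fixes f :: "'a::real_inner \<Rightarrow> real"
  assumes deriv: "\<And>x. (f has_derivative (\<lambda>h. g x \<bullet> h)) (at x)"
    and lipschitz: "\<And>x y. norm (g x - g y) \<le> L * norm (x - y)"
  shows "f y \<le> f x + g x \<bullet> (y - x) + L / 2 * (norm (y - x))\<^sup>2"
proof -
  define v where "v = y - x"
  define \<phi> where "\<phi> s = f (x + s *\<^sub>R v) - s * (g x \<bullet> v) - L / 2 * s\<^sup>2 * (norm v)\<^sup>2" for s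
  have "\<phi> 1 \<le> \<phi> 0"
  proof (rule DERIV_nonpos_imp_nonincreasing[of 0 1])
    fix s :: real assume s: "0 \<le> s" "s \<le> 1"
    have "(g (x + s *\<^sub>R v) - g x) \<bullet> v \<le> norm (g (x + s *\<^sub>R v) - g x) * norm v"
      by (rule norm_cauchy_schwarz)
    also have "\<dots> \<le> L * norm (s *\<^sub>R v) * norm v"
      using lipschitz[of "x + s *\<^sub>R v" x] by (intro mult_right_mono) auto
    also have "\<dots> = L * s * (norm v)\<^sup>2"
      using s by (simp add: power2_eq_square)
    finally have "g (x + s *\<^sub>R v) \<bullet> v - g x \<bullet> v - L * s * (norm v)\<^sup>2 \<le> 0"
      by (simp add: inner_diff_left)
    moreover have "(\<phi> has_real_derivative g (x + s *\<^sub>R v) \<bullet> v - g x \<bullet> v - L * s * (norm v)\<^sup>2) (at s)"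
      unfolding \<phi>_def
      by (rule has_real_derivative_along_line[OF deriv, THEN DERIV_diff, THEN DERIV_diff])
        (auto intro!: derivative_eq_intros)
    ultimately show "\<exists>y. (\<phi> has_real_derivative y) (at s) \<and> y \<le> 0"
      by blast
  qed simp
  then show ?thesis
    by (simp add: \<phi>_def v_def algebra_simps)
qed

lemma convex_on_gradient_inequality:
  fixes f :: "'a::real_inner \<Rightarrow> real"
  assumes deriv: "\<And>x. (f has_derivative (\<lambda>h. g x \<bullet> h)) (at x)"
    and convex: "convex_on UNIV f"
  shows "f x + g x \<bullet> (y - x) \<le> f y"
proof -
  define \<phi> where "\<phi> s = f (x + s *\<^sub>R (y - x))" for s :: real
  have "convex_on UNIV \<phi>"
  proof (rule convex_onI)
    fix t u w :: real assume t: "0 < t" "t < 1"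
    have "x + ((1 - t) * u + t * w) *\<^sub>R (y - x)
        = (1 - t) *\<^sub>R (x + u *\<^sub>R (y - x)) + t *\<^sub>R (x + w *\<^sub>R (y - x))"
      by (simp add: algebra_simps)
    then show "\<phi> ((1 - t) *\<^sub>R u + t *\<^sub>R w) \<le> (1 - t) * \<phi> u + t * \<phi> w"
      unfolding \<phi>_def using t convex_onD[OF convex, of t "x + u *\<^sub>R (y - x)" "x + w *\<^sub>R (y - x)"]
      by simp
  qed simp
  moreover have "(\<phi> has_real_derivative g x \<bullet> (y - x)) (at 0 within UNIV)"
    unfolding \<phi>_def using has_real_derivative_along_line[OF deriv, of x "y - x" 0] by simp
  ultimately have "g x \<bullet> (y - x) * (1 - 0) \<le> \<phi> 1 - \<phi> 0"
    by (intro convex_on_imp_above_tangent) auto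
  then show ?thesis
    by (simp add: \<phi>_def)
qed

lemma gradient_zero_at_minimizer:
  fixes f :: "'a::real_inner \<Rightarrow> real"
  assumes "(f has_derivative (\<lambda>h. g \<bullet> h)) (at x)" and "\<And>y. f x \<le> f y"
  shows "g = 0"
proof -
  have "(\<lambda>h. g \<bullet> h) = (\<lambda>h. 0)"
    using assms by (intro has_derivative_local_min) auto
  then have "g \<bullet> g = 0"
    by metis
  then show ?thesis
    by simp
qed

lemma (in prob_space) indep_var_nn_integral_iterated:
  assumes indep: "indep_var S Y T Z" and H: "H \<in> borel_measurable (S \<Otimes>\<^sub>M T)"
  shows "(\<integral>\<^sup>+\<omega>. H (Y \<omega>, Z \<omega>) \<partial>M) = (\<integral>\<^sup>+\<omega>. (\<integral>\<^sup>+\<omega>'. H (Y \<omega>, Z \<omega>') \<partial>M) \<partial>M)"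
proof -
  have rv: "random_variable S Y" "random_variable T Z"
    and joint: "distr M S Y \<Otimes>\<^sub>M distr M T Z = distr M (S \<Otimes>\<^sub>M T) (\<lambda>\<omega>. (Y \<omega>, Z \<omega>))"
    using indep[unfolded indep_var_distribution_eq] by auto
  interpret PY: prob_space "distr M S Y" by (rule prob_space_distr) (fact rv)
  interpret PZ: prob_space "distr M T Z" by (rule prob_space_distr) (fact rv)
  interpret P: pair_sigma_finite "distr M S Y" "distr M T Z" ..
  have H': "H \<in> borel_measurable (distr M S Y \<Otimes>\<^sub>M distr M T Z)"
    using H by (simp add: measurable_def space_pair_measure sets_pair_measure)
  have "(\<integral>\<^sup>+\<omega>. H (Y \<omega>, Z \<omega>) \<partial>M) = (\<integral>\<^sup>+p. H p \<partial>distr M (S \<Otimes>\<^sub>M T) (\<lambda>\<omega>. (Y \<omega>, Z \<omega>)))"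
    using H rv by (subst nn_integral_distr) (auto intro: measurable_Pair)
  also have "\<dots> = (\<integral>\<^sup>+y. (\<integral>\<^sup>+z. H (y, z) \<partial>distr M T Z) \<partial>distr M S Y)"
    using PZ.nn_integral_fst[OF H'] by (simp add: joint)
  also have "\<dots> = (\<integral>\<^sup>+\<omega>. (\<integral>\<^sup>+z. H (Y \<omega>, z) \<partial>distr M T Z) \<partial>M)"
    using PZ.borel_measurable_nn_integral_fst[OF H'] rv
    by (subst nn_integral_distr) (auto simp: measurable_distr_eq1)
  also have "\<dots> = (\<integral>\<^sup>+\<omega>. (\<integral>\<^sup>+\<omega>'. H (Y \<omega>, Z \<omega>') \<partial>M) \<partial>M)"
  proof (rule nn_integral_cong)
    fix \<omega> assume "\<omega> \<in> space M"
    then have "(\<lambda>z. H (Y \<omega>, z)) \<in> borel_measurable T"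
      using H measurable_space[OF rv(1)] by simp
    then show "(\<integral>\<^sup>+z. H (Y \<omega>, z) \<partial>distr M T Z) = (\<integral>\<^sup>+\<omega>'. H (Y \<omega>, Z \<omega>') \<partial>M)"
      using rv by (subst nn_integral_distr) auto
  qed
  finally show ?thesis .
qed

lemma (in prob_space) indep_vars_indep_var:
  assumes "indep_vars M' X I" "i \<in> I" "j \<in> I" "i \<noteq> j"
  shows "indep_var (M' i) (X i) (M' j) (X j)"
proof -
  have "indep_var (PiM {i} M') (\<lambda>\<omega>. restrict (\<lambda>k. X k \<omega>) {i}) (PiM {j} M') (\<lambda>\<omega>. restrict (\<lambda>k. X k \<omega>) {j})"
    using assms by (intro indep_var_restrict) auto
  from indep_var_compose[OF this measurable_component_singleton measurable_component_singleton]
  show ?thesis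
    by (simp add: o_def)
qed

lemma (in prob_space) indep_var_integral_inner:
  fixes U V :: "'a \<Rightarrow> 'b::euclidean_space"
  assumes indep: "indep_var borel U borel V" and U: "integrable M U" and V: "integrable M V"
  shows "integrable M (\<lambda>\<omega>. U \<omega> \<bullet> V \<omega>)"
    and "(\<integral>\<omega>. U \<omega> \<bullet> V \<omega> \<partial>M) = (\<integral>\<omega>. U \<omega> \<partial>M) \<bullet> (\<integral>\<omega>. V \<omega> \<partial>M)"
proof -
  have coordinates: "indep_var borel (\<lambda>\<omega>. U \<omega> \<bullet> k) borel (\<lambda>\<omega>. V \<omega> \<bullet> k)" for k
    using indep_var_compose[OF indep, of "\<lambda>u. u \<bullet> k" borel "\<lambda>u. u \<bullet> k" borel] by (simp add: o_def)
  have expand: "U \<omega> \<bullet> V \<omega> = (\<Sum>k\<in>Basis. (U \<omega> \<bullet> k) * (V \<omega> \<bullet> k))" for \<omega>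
    by (rule euclidean_inner)
  have products: "integrable M (\<lambda>\<omega>. (U \<omega> \<bullet> k) * (V \<omega> \<bullet> k))"
      "(\<integral>\<omega>. (U \<omega> \<bullet> k) * (V \<omega> \<bullet> k) \<partial>M) = (\<integral>\<omega>. U \<omega> \<partial>M) \<bullet> k * ((\<integral>\<omega>. V \<omega> \<partial>M) \<bullet> k)" for k
    using U V by (simp_all add: indep_var_integrable indep_var_lebesgue_integral coordinates)
  show "integrable M (\<lambda>\<omega>. U \<omega> \<bullet> V \<omega>)"
    unfolding expand by (intro Bochner_Integration.integrable_sum products)
  have "(\<integral>\<omega>. U \<omega> \<bullet> V \<omega> \<partial>M) = (\<Sum>k\<in>Basis. (\<integral>\<omega>. U \<omega> \<partial>M) \<bullet> k * ((\<integral>\<omega>. V \<omega> \<partial>M) \<bullet> k))"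
    unfolding expand by (simp add: Bochner_Integration.integral_sum products)
  also have "\<dots> = (\<integral>\<omega>. U \<omega> \<partial>M) \<bullet> (\<integral>\<omega>. V \<omega> \<partial>M)"
    by (rule euclidean_inner[symmetric])
  finally show "(\<integral>\<omega>. U \<omega> \<bullet> V \<omega> \<partial>M) = (\<integral>\<omega>. U \<omega> \<partial>M) \<bullet> (\<integral>\<omega>. V \<omega> \<partial>M)" .
qed

lemma (in prob_space) integral_norm_sum_squared_indep:
  fixes e :: "'i \<Rightarrow> 'a \<Rightarrow> 'b::euclidean_space"
  assumes "finite I"
    and indep: "\<And>i j. i \<in> I \<Longrightarrow> j \<in> I \<Longrightarrow> i \<noteq> j \<Longrightarrow> indep_var borel (e i) borel (e j)"
    and integrable: "\<And>i. i \<in> I \<Longrightarrow> integrable M (e i)"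
    and centered: "\<And>i. i \<in> I \<Longrightarrow> (\<integral>\<omega>. e i \<omega> \<partial>M) = 0"
    and square_integrable: "\<And>i. i \<in> I \<Longrightarrow> integrable M (\<lambda>\<omega>. (norm (e i \<omega>))\<^sup>2)"
  shows "integrable M (\<lambda>\<omega>. (norm (\<Sum>i\<in>I. e i \<omega>))\<^sup>2)"
    and "(\<integral>\<omega>. (norm (\<Sum>i\<in>I. e i \<omega>))\<^sup>2 \<partial>M) = (\<Sum>i\<in>I. \<integral>\<omega>. (norm (e i \<omega>))\<^sup>2 \<partial>M)"
proof -
  have expand: "(\<lambda>\<omega>. (norm (\<Sum>i\<in>I. e i \<omega>))\<^sup>2) = (\<lambda>\<omega>. \<Sum>i\<in>I. \<Sum>j\<in>I. e i \<omega> \<bullet> e j \<omega>)"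
    by (simp add: power2_norm_eq_inner inner_sum_left inner_sum_right) (rule ext, rule sum.swap)
  have pairs: "integrable M (\<lambda>\<omega>. e i \<omega> \<bullet> e j \<omega>) \<and>
      (\<integral>\<omega>. e i \<omega> \<bullet> e j \<omega> \<partial>M) = (if i = j then \<integral>\<omega>. (norm (e i \<omega>))\<^sup>2 \<partial>M else 0)"
    if "i \<in> I" "j \<in> I" for i j
  proof (cases "i = j")
    case True
    then show ?thesis
      using square_integrable[OF \<open>i \<in> I\<close>] by (simp add: power2_norm_eq_inner)
  next
    case False
    then show ?thesis
      using indep_var_integral_inner[OF indep integrable integrable] centered that by simp
  qed
  show "integrable M (\<lambda>\<omega>. (norm (\<Sum>i\<in>I. e i \<omega>))\<^sup>2)"
    unfolding expand using pairs by (intro Bochner_Integration.integrable_sum) auto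
  have "(\<integral>\<omega>. (\<Sum>i\<in>I. \<Sum>j\<in>I. e i \<omega> \<bullet> e j \<omega>) \<partial>M) = (\<Sum>i\<in>I. \<Sum>j\<in>I. \<integral>\<omega>. e i \<omega> \<bullet> e j \<omega> \<partial>M)"
    using pairs by (subst Bochner_Integration.integral_sum)
      (auto intro!: sum.cong Bochner_Integration.integral_sum Bochner_Integration.integrable_sum)
  also have "\<dots> = (\<Sum>i\<in>I. \<integral>\<omega>. (norm (e i \<omega>))\<^sup>2 \<partial>M)"
    using pairs by (intro sum.cong refl) (simp add: sum.delta'[OF \<open>finite I\<close>])
  finally show "(\<integral>\<omega>. (norm (\<Sum>i\<in>I. e i \<omega>))\<^sup>2 \<partial>M) = (\<Sum>i\<in>I. \<integral>\<omega>. (norm (e i \<omega>))\<^sup>2 \<partial>M)"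
    unfolding expand .
qed

lemma (in prob_space) integral_norm_squared_bias_variance:
  fixes Y :: "'a \<Rightarrow> 'b::euclidean_space"
  assumes Y: "integrable M Y" and variance: "integrable M (\<lambda>\<omega>. (norm (Y \<omega> - expectation Y))\<^sup>2)"
  shows "integrable M (\<lambda>\<omega>. (norm (Y \<omega> - c))\<^sup>2)"
    and "(\<integral>\<omega>. (norm (Y \<omega> - c))\<^sup>2 \<partial>M) = (norm (expectation Y - c))\<^sup>2 + (\<integral>\<omega>. (norm (Y \<omega> - expectation Y))\<^sup>2 \<partial>M)"
proof -
  define m where "m = expectation Y"
  have expand: "(norm (Y \<omega> - c))\<^sup>2 = (norm (Y \<omega> - m))\<^sup>2 + 2 * ((Y \<omega> - m) \<bullet> (m - c)) + (norm (m - c))\<^sup>2" for \<omega>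
    by (simp add: power2_norm_eq_inner algebra_simps inner_commute)
  have cross: "integrable M (\<lambda>\<omega>. (Y \<omega> - m) \<bullet> (m - c))" "(\<integral>\<omega>. (Y \<omega> - m) \<bullet> (m - c) \<partial>M) = 0"
    using Y by (auto simp: m_def prob_space)
  show "integrable M (\<lambda>\<omega>. (norm (Y \<omega> - c))\<^sup>2)"
    unfolding expand using variance cross by (simp add: m_def)
  show "(\<integral>\<omega>. (norm (Y \<omega> - c))\<^sup>2 \<partial>M) = (norm (expectation Y - c))\<^sup>2 + (\<integral>\<omega>. (norm (Y \<omega> - expectation Y))\<^sup>2 \<partial>M)"
    unfolding expand using variance cross by (simp add: m_def prob_space)
qed

lemma nn_integral_le_integral:
  fixes u v :: "'a \<Rightarrow> real"
  assumes "integrable M v" "\<And>x. x \<in> space M \<Longrightarrow> 0 \<le> u x" "\<And>x. x \<in> space M \<Longrightarrow> u x \<le> v x"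
  shows "(\<integral>\<^sup>+x. ennreal (u x) \<partial>M) \<le> ennreal (\<integral>x. v x \<partial>M)"
proof -
  have "(\<integral>\<^sup>+x. ennreal (u x) \<partial>M) \<le> (\<integral>\<^sup>+x. ennreal (v x) \<partial>M)"
    using assms by (intro nn_integral_mono ennreal_leI) auto
  also have "\<dots> = ennreal (\<integral>x. v x \<partial>M)"
    using assms by (intro nn_integral_eq_integral AE_I2) (auto intro: order.trans)
  finally show ?thesis .
qed

lemma integral_mono_of_nn_integral_le:
  fixes u v :: "'a \<Rightarrow> real"
  assumes "integrable M u" "integrable M v" "\<And>x. x \<in> space M \<Longrightarrow> 0 \<le> u x" "\<And>x. x \<in> space M \<Longrightarrow> 0 \<le> v x"
    and "(\<integral>\<^sup>+x. ennreal (u x) \<partial>M) \<le> (\<integral>\<^sup>+x. ennreal (v x) \<partial>M)"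
  shows "(\<integral>x. u x \<partial>M) \<le> (\<integral>x. v x \<partial>M)"
  using assms by (simp add: nn_integral_eq_integral AE_I2 integral_nonneg)

lemma avg_fun_has_derivative:
  fixes fs :: "nat \<Rightarrow> 'a::real_inner \<Rightarrow> real"
  assumes "\<And>i x. i < n \<Longrightarrow> (fs i has_derivative (\<lambda>h. gfs i x \<bullet> h)) (at x)"
  shows "(avg_fun n fs has_derivative (\<lambda>h. ((\<Sum>i<n. gfs i x) /\<^sub>R real n) \<bullet> h)) (at x)"
proof (cases "n = 0")
  case True
  then show ?thesis
    by (simp add: avg_fun_def)
next
  case False
  then have "((\<lambda>x. (\<Sum>i<n. fs i x) / real n) has_derivative (\<lambda>h. (\<Sum>i<n. gfs i x \<bullet> h) / real n)) (at x)"
    using assms by (auto intro!: derivative_eq_intros has_derivative_sum)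
  then show ?thesis
    unfolding avg_fun_def by (simp add: inner_sum_left divide_inverse mult.commute)
qed

lemma avg_gradient_lipschitz:
  fixes gfs :: "nat \<Rightarrow> 'a::real_normed_vector \<Rightarrow> 'b::real_normed_vector"
  assumes "\<And>i x y. i < n \<Longrightarrow> norm (gfs i x - gfs i y) \<le> L i * norm (x - y)"
  shows "norm ((\<Sum>i<n. gfs i x) /\<^sub>R real n - (\<Sum>i<n. gfs i y) /\<^sub>R real n) \<le> (\<Sum>i<n. L i) / real n * norm (x - y)"
proof -
  have "norm ((\<Sum>i<n. gfs i x) /\<^sub>R real n - (\<Sum>i<n. gfs i y) /\<^sub>R real n) = norm (\<Sum>i<n. gfs i x - gfs i y) / real n"
    by (simp add: sum_subtractf flip: scaleR_diff_right) (simp add: divide_inverse mult.commute)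
  also have "\<dots> \<le> (\<Sum>i<n. L i * norm (x - y)) / real n"
    using assms by (intro divide_right_mono order.trans[OF norm_sum sum_mono]) auto
  finally show ?thesis
    by (simp add: sum_distrib_right)
qed

lemma avg_inf_le_avg_fun:
  assumes "\<And>i. i < n \<Longrightarrow> bdd_below (range (fs i))"
  shows "avg_inf n fs \<le> avg_fun n fs x"
proof -
  have "(\<Sum>i<n. Inf (range (fs i))) \<le> (\<Sum>i<n. fs i x)"
    using assms by (intro sum_mono cInf_lower) auto
  then show ?thesis
    unfolding avg_fun_def avg_inf_def by (intro divide_right_mono) auto
qed

lemma Min_image_mult_sum_le:
  fixes d w :: "'i \<Rightarrow> real"
  assumes "finite A" "A \<noteq> {}" "\<And>t. t \<in> A \<Longrightarrow> 0 \<le> w t"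
  shows "Min (d ` A) * sum w A \<le> (\<Sum>t\<in>A. w t * d t)"
proof -
  have "Min (d ` A) * sum w A = (\<Sum>t\<in>A. w t * Min (d ` A))"
    by (simp add: sum_distrib_right mult.commute)
  also have "\<dots> \<le> (\<Sum>t\<in>A. w t * d t)"
    using assms by (intro sum_mono mult_left_mono) auto
  finally show ?thesis .
qed

lemma weighted_gradient_sum_le:
  fixes q e \<eta> B :: "nat \<Rightarrow> real" and L \<eta>max s :: real
  assumes L: "0 \<le> L" and \<eta>: "\<And>t. 0 \<le> \<eta> t" "\<And>t. \<eta> t \<le> \<eta>max"
    and nonneg: "\<And>t. 0 \<le> q t" "\<And>t. 0 \<le> e t"
    and descent: "\<And>t. e (Suc t) + \<eta> t * (1 - L * \<eta> t / 2) * q t \<le> e t + L * (\<eta> t)\<^sup>2 * s / (2 * B t)"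
  shows "(\<Sum>t<T. \<eta> t * q t) * (2 - L * \<eta>max) \<le> 2 * e 0 + L * s * (\<Sum>t<T. (\<eta> t)\<^sup>2 / B t)"
proof -
  have step: "\<eta> t * q t * (2 - L * \<eta>max) \<le> 2 * (e t - e (Suc t)) + L * s * ((\<eta> t)\<^sup>2 / B t)" for t
  proof -
    have "\<eta> t * q t * (2 - L * \<eta>max) \<le> \<eta> t * q t * (2 - L * \<eta> t)"
      using L \<eta> nonneg by (intro mult_left_mono) (auto intro: mult_left_mono)
    then show ?thesis
      using descent[of t] by (simp add: field_simps)
  qed
  have "(\<Sum>t<T. \<eta> t * q t) * (2 - L * \<eta>max) = (\<Sum>t<T. \<eta> t * q t * (2 - L * \<eta>max))"
    by (simp add: sum_distrib_right)
  also have "\<dots> \<le> (\<Sum>t<T. 2 * (e t - e (Suc t)) + L * s * ((\<eta> t)\<^sup>2 / B t))"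
    by (intro sum_mono step)
  also have "\<dots> = 2 * (e 0 - e T) + L * s * (\<Sum>t<T. (\<eta> t)\<^sup>2 / B t)"
    unfolding sum.distrib sum_distrib_left[symmetric] sum_lessThan_telescope' ..
  finally show ?thesis
    using nonneg(2)[of T] by simp
qed

lemma weighted_gap_sum_le:
  fixes a d q \<eta> B :: "nat \<Rightarrow> real" and \<eta>max s :: real
  assumes \<eta>: "\<And>t. 0 \<le> \<eta> t" "\<And>t. \<eta> t \<le> \<eta>max"
    and nonneg: "\<And>t. 0 \<le> a t" "\<And>t. 0 \<le> q t"
    and distance: "\<And>t. a (Suc t) + 2 * \<eta> t * d t \<le> a t + (\<eta> t)\<^sup>2 * q t + (\<eta> t)\<^sup>2 * s / B t"
  shows "2 * (\<Sum>t<T. \<eta> t * d t) \<le> a 0 + \<eta>max * (\<Sum>t<T. \<eta> t * q t) + s * (\<Sum>t<T. (\<eta> t)\<^sup>2 / B t)"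
proof -
  have step: "2 * \<eta> t * d t \<le> (a t - a (Suc t)) + \<eta>max * (\<eta> t * q t) + s * ((\<eta> t)\<^sup>2 / B t)" for t
  proof -
    have "(\<eta> t)\<^sup>2 * q t \<le> \<eta>max * (\<eta> t * q t)"
      using \<eta> nonneg by (simp add: power2_eq_square mult_right_mono mult.assoc[symmetric])
    then show ?thesis
      using distance[of t] by (simp add: mult.commute)
  qed
  have "2 * (\<Sum>t<T. \<eta> t * d t) = (\<Sum>t<T. 2 * \<eta> t * d t)"
    by (simp add: sum_distrib_left mult.assoc)
  also have "\<dots> \<le> (\<Sum>t<T. (a t - a (Suc t)) + \<eta>max * (\<eta> t * q t) + s * ((\<eta> t)\<^sup>2 / B t))"
    by (intro sum_mono step)
  also have "\<dots> = a 0 - a T + \<eta>max * (\<Sum>t<T. \<eta> t * q t) + s * (\<Sum>t<T. (\<eta> t)\<^sup>2 / B t)"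
    unfolding sum.distrib sum_distrib_left[symmetric] sum_lessThan_telescope' ..
  finally show ?thesis
    using nonneg(1)[of T] by simp
qed

lemma sgd_rate_from_recurrences:
  fixes a d q e \<eta> B :: "nat \<Rightarrow> real" and L \<eta>max s :: real and T :: nat
  assumes L: "0 \<le> L" "L * \<eta>max < 2"
    and \<eta>: "\<And>t. 0 \<le> \<eta> t" "\<And>t. \<eta> t \<le> \<eta>max"
    and nonneg: "\<And>t. 0 \<le> a t" "\<And>t. 0 \<le> q t" "\<And>t. 0 \<le> e t"
    and distance: "\<And>t. a (Suc t) + 2 * \<eta> t * d t \<le> a t + (\<eta> t)\<^sup>2 * q t + (\<eta> t)\<^sup>2 * s / B t"
    and descent: "\<And>t. e (Suc t) + \<eta> t * (1 - L * \<eta> t / 2) * q t \<le> e t + L * (\<eta> t)\<^sup>2 * s / (2 * B t)"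
    and sum_nz: "(\<Sum>t<T. \<eta> t) \<noteq> 0"
  shows "Min (d ` {..<T}) \<le> (a 0 / 2 + \<eta>max * e 0 / (2 - L * \<eta>max)) * (1 / (\<Sum>t<T. \<eta> t))
     + s / 2 * (1 + L * \<eta>max / (2 - L * \<eta>max)) * ((\<Sum>t<T. (\<eta> t)\<^sup>2 / B t) / (\<Sum>t<T. \<eta> t))"
proof -
  define c where "c = 2 - L * \<eta>max"
  define S where "S = (\<Sum>t<T. \<eta> t)"
  define Q where "Q = (\<Sum>t<T. (\<eta> t)\<^sup>2 / B t)"
  have c: "0 < c"
    using L by (simp add: c_def)
  have S: "0 < S"
    using sum_nz \<eta> unfolding S_def by (metis order_le_less sum_nonneg)
  have gap_sum: "2 * (\<Sum>t<T. \<eta> t * d t) \<le> a 0 + \<eta>max * (\<Sum>t<T. \<eta> t * q t) + s * Q"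
    unfolding Q_def using \<eta> nonneg(1,2) distance by (rule weighted_gap_sum_le)
  have gradient_sum: "(\<Sum>t<T. \<eta> t * q t) * c \<le> 2 * e 0 + L * s * Q"
    unfolding c_def Q_def using L(1) \<eta> nonneg(2,3) descent by (rule weighted_gradient_sum_le)
  have "T \<noteq> 0"
    using sum_nz by (metis lessThan_0 sum.empty)
  then have "Min (d ` {..<T}) * S \<le> (\<Sum>t<T. \<eta> t * d t)"
    unfolding S_def using \<eta> by (intro Min_image_mult_sum_le) auto
  then have "2 * Min (d ` {..<T}) * S * c \<le> (a 0 + \<eta>max * (\<Sum>t<T. \<eta> t * q t) + s * Q) * c"
    using gap_sum c by (intro mult_right_mono) auto
  also have "\<dots> = a 0 * c + \<eta>max * ((\<Sum>t<T. \<eta> t * q t) * c) + s * Q * c"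
    by (simp add: algebra_simps)
  also have "\<dots> \<le> a 0 * c + \<eta>max * (2 * e 0 + L * s * Q) + s * Q * c"
    using mult_left_mono[OF gradient_sum] \<eta>[of 0] by simp
  finally have "Min (d ` {..<T}) \<le> (a 0 * c + \<eta>max * (2 * e 0 + L * s * Q) + s * Q * c) / (2 * S * c)"
    using S c by (simp add: pos_le_divide_eq mult_ac)
  also have "\<dots> = (a 0 / 2 + \<eta>max * e 0 / c) * (1 / S) + s / 2 * (1 + L * \<eta>max / c) * (Q / S)"
    using S c by (simp add: field_simps)
  finally show ?thesis
    unfolding c_def S_def Q_def .
qed

locale minibatch_sgd =
  fixes F :: "'a::euclidean_space \<Rightarrow> real" and g :: "'a \<Rightarrow> 'a" and L F_low :: real
    and D :: "'b measure" and G :: "'b \<Rightarrow> 'a \<Rightarrow> 'a" and \<sigma> :: real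
    and M :: "'m measure" and X :: "nat \<Rightarrow> nat \<Rightarrow> 'm \<Rightarrow> 'b" and b :: "nat \<Rightarrow> nat"
    and \<eta> :: "nat \<Rightarrow> real" and \<eta>max :: real and \<theta> :: "nat \<Rightarrow> 'm \<Rightarrow> 'a" and \<theta>0 \<theta>s :: 'a
  assumes F_deriv: "\<And>x. (F has_derivative (\<lambda>h. g x \<bullet> h)) (at x)"
    and g_lipschitz: "\<And>x y. norm (g x - g y) \<le> L * norm (x - y)"
    and F_convex: "convex_on UNIV F"
    and F_minimizer: "\<And>x. F \<theta>s \<le> F x"
    and F_lower: "\<And>x. F_low \<le> F x"
    and prob_D: "prob_space D"
    and G_measurable: "(\<lambda>(\<xi>, x). G \<xi> x) \<in> borel_measurable (D \<Otimes>\<^sub>M borel)"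
    and G_integrable: "\<And>x. integrable D (\<lambda>\<xi>. G \<xi> x)"
    and G_unbiased: "\<And>x. (\<integral>\<xi>. G \<xi> x \<partial>D) = g x"
    and G_variance_integrable: "\<And>x. integrable D (\<lambda>\<xi>. (norm (G \<xi> x - g x))\<^sup>2)"
    and G_variance: "\<And>x. (\<integral>\<xi>. (norm (G \<xi> x - g x))\<^sup>2 \<partial>D) \<le> \<sigma>\<^sup>2"
    and prob_M: "prob_space M"
    and X_indep: "prob_space.indep_vars M (\<lambda>_. D) (\<lambda>(t, i). X t i) {(t, i). i < b t}"
    and X_distr: "\<And>t i. i < b t \<Longrightarrow> distr M D (X t i) = D"
    and b_pos: "\<And>t. 0 < b t"
    and \<theta>_0: "\<And>\<omega>. \<theta> 0 \<omega> = \<theta>0"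
    and \<theta>_Suc: "\<And>t \<omega>. \<theta> (Suc t) \<omega> = \<theta> t \<omega> - \<eta> t *\<^sub>R ((\<Sum>i<b t. G (X t i \<omega>) (\<theta> t \<omega>)) /\<^sub>R real (b t))"
    and \<eta>_nonneg: "\<And>t. 0 \<le> \<eta> t"
    and \<eta>_le_max: "\<And>t. \<eta> t \<le> \<eta>max"
    and step_size: "L * \<eta>max < 2"
begin

sublocale M: prob_space M by (fact prob_M)
sublocale D: prob_space D by (fact prob_D)

lemma L_nonneg: "0 \<le> L"
proof -
  obtain e :: 'a where "e \<in> Basis"
    using nonempty_Basis by blast
  then have "norm (g 0 - g e) \<le> L"
    using g_lipschitz[of 0 e] by simp
  then show ?thesis
    using norm_ge_zero order.trans by blast
qed

lemma L_mult_\<eta>_lt: "L * \<eta> t < 2"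
  using mult_left_mono[OF \<eta>_le_max[of t] L_nonneg] step_size by linarith

lemma F_measurable[measurable]: "F \<in> borel_measurable borel"
  using F_deriv
  by (intro borel_measurable_continuous_onI) (meson has_derivative_continuous continuous_at_imp_continuous_on)

lemma g_measurable[measurable]: "g \<in> borel_measurable borel"
proof -
  have "L-lipschitz_on UNIV g"
    by (rule lipschitz_onI) (auto simp: dist_norm g_lipschitz L_nonneg)
  then show ?thesis
    by (intro borel_measurable_continuous_onI lipschitz_on_continuous_on)
qed

lemma g_minimizer: "g \<theta>s = 0"
  using F_deriv F_minimizer by (rule gradient_zero_at_minimizer)

lemma gradient_norm_bound: "(norm (g x))\<^sup>2 \<le> L\<^sup>2 * (norm (x - \<theta>s))\<^sup>2"
proof -
  have "norm (g x) \<le> L * norm (x - \<theta>s)"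
    using g_lipschitz[of x \<theta>s] by (simp add: g_minimizer)
  then show ?thesis
    by (metis norm_ge_zero power_mono power_mult_distrib)
qed

lemma gap_bound: "F x - F \<theta>s \<le> L / 2 * (norm (x - \<theta>s))\<^sup>2"
  using lipschitz_gradient_upper_bound[OF F_deriv g_lipschitz, where x = \<theta>s and y = x] by (simp add: g_minimizer)

lemma G_measurable_comp[measurable (raw)]:
  assumes "f \<in> measurable N D" "h \<in> borel_measurable N"
  shows "(\<lambda>\<omega>. G (f \<omega>) (h \<omega>)) \<in> borel_measurable N"
  using measurable_compose[OF measurable_Pair[OF assms] G_measurable] by simp

lemma X_measurable[measurable]: "i < b t \<Longrightarrow> X t i \<in> measurable M D"
  using X_indep unfolding M.indep_vars_def by auto

lemma sgd_step_measurable: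
  assumes "\<And>i. i < b t \<Longrightarrow> y i \<in> measurable N D" "x \<in> borel_measurable N"
  shows "(\<lambda>\<omega>. x \<omega> - \<eta> t *\<^sub>R ((\<Sum>i<b t. G (y i \<omega>) (x \<omega>)) /\<^sub>R real (b t))) \<in> borel_measurable N"
  using assms by (intro borel_measurable_diff borel_measurable_scaleR borel_measurable_sum G_measurable_comp measurable_const) auto

lemma \<theta>_measurable[measurable]: "\<theta> t \<in> borel_measurable M"
proof (induction t)
  case 0
  then show ?case by (simp add: \<theta>_0)
next
  case (Suc t)
  then show ?case
    unfolding \<theta>_Suc[abs_def] by (intro sgd_step_measurable X_measurable)
qed

definition batch_grad :: "nat \<Rightarrow> 'a \<Rightarrow> 'm \<Rightarrow> 'a" where
  "batch_grad t x \<omega> = (\<Sum>i<b t. G (X t i \<omega>) x) /\<^sub>R real (b t)"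

lemma sample_integral:
  fixes f :: "'b \<Rightarrow> 'c::{banach, second_countable_topology}"
  assumes "i < b t" "f \<in> borel_measurable D"
  shows "integrable M (\<lambda>\<omega>. f (X t i \<omega>)) \<longleftrightarrow> integrable D f"
    and "(\<integral>\<omega>. f (X t i \<omega>) \<partial>M) = (\<integral>\<xi>. f \<xi> \<partial>D)"
  using integrable_distr_eq[of "X t i" M D f] integral_distr[of "X t i" M D f] assms
  by (simp_all add: X_distr)

lemma batch_grad_mean: "integrable M (batch_grad t x)" "(\<integral>\<omega>. batch_grad t x \<omega> \<partial>M) = g x"
proof -
  have sample: "integrable M (\<lambda>\<omega>. G (X t i \<omega>) x)" "(\<integral>\<omega>. G (X t i \<omega>) x \<partial>M) = g x" if "i < b t" for i
    using sample_integral[OF that, of "\<lambda>\<xi>. G \<xi> x"] by (simp_all add: G_integrable G_unbiased)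
  then show "integrable M (batch_grad t x)"
    unfolding batch_grad_def[abs_def] by (intro integrable_scaleR_right Bochner_Integration.integrable_sum) auto
  show "(\<integral>\<omega>. batch_grad t x \<omega> \<partial>M) = g x"
    using sample b_pos[of t] unfolding batch_grad_def by (simp add: Bochner_Integration.integral_sum sum_constant_scaleR)
qed

lemma batch_grad_variance:
  shows "integrable M (\<lambda>\<omega>. (norm (batch_grad t x \<omega> - g x))\<^sup>2)"
    and "(\<integral>\<omega>. (norm (batch_grad t x \<omega> - g x))\<^sup>2 \<partial>M) \<le> \<sigma>\<^sup>2 / real (b t)"
proof -
  define e where "e i \<omega> = G (X t i \<omega>) x - g x" for i \<omega>
  have e_measurable: "(\<lambda>\<xi>. G \<xi> x - g x) \<in> borel_measurable D"
    by measurable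
  have indep: "M.indep_var borel (e i) borel (e j)" if "i \<in> {..<b t}" "j \<in> {..<b t}" "i \<noteq> j" for i j
    using M.indep_var_compose[OF M.indep_vars_indep_var[OF X_indep, of "(t, i)" "(t, j)"] e_measurable e_measurable] that
    by (simp add: e_def[abs_def] o_def)
  have moments: "integrable M (e i)" "(\<integral>\<omega>. e i \<omega> \<partial>M) = 0"
      "integrable M (\<lambda>\<omega>. (norm (e i \<omega>))\<^sup>2)" "(\<integral>\<omega>. (norm (e i \<omega>))\<^sup>2 \<partial>M) \<le> \<sigma>\<^sup>2"
    if "i \<in> {..<b t}" for i
    using that sample_integral[of i t "\<lambda>\<xi>. G \<xi> x - g x"] sample_integral[of i t "\<lambda>\<xi>. (norm (G \<xi> x - g x))\<^sup>2"]
    by (simp_all add: e_def[abs_def] G_integrable G_unbiased G_variance_integrable G_variance D.prob_space)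
  have sum: "batch_grad t x \<omega> - g x = (\<Sum>i<b t. e i \<omega>) /\<^sub>R real (b t)" for \<omega>
    using b_pos[of t] by (simp add: batch_grad_def e_def sum_subtractf scaleR_diff_right sum_constant_scaleR)
  have "integrable M (\<lambda>\<omega>. (norm (\<Sum>i<b t. e i \<omega>))\<^sup>2)"
    and sum_variance: "(\<integral>\<omega>. (norm (\<Sum>i<b t. e i \<omega>))\<^sup>2 \<partial>M) = (\<Sum>i<b t. \<integral>\<omega>. (norm (e i \<omega>))\<^sup>2 \<partial>M)"
    by (rule M.integral_norm_sum_squared_indep[OF finite_lessThan indep moments(1-3)]; assumption)+
  have scale: "(norm (batch_grad t x \<omega> - g x))\<^sup>2 = (norm (\<Sum>i<b t. e i \<omega>))\<^sup>2 / (real (b t))\<^sup>2" for \<omega>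
    unfolding sum using b_pos[of t] by (simp add: power2_eq_square field_simps)
  then show "integrable M (\<lambda>\<omega>. (norm (batch_grad t x \<omega> - g x))\<^sup>2)"
    using \<open>integrable M (\<lambda>\<omega>. (norm (\<Sum>i<b t. e i \<omega>))\<^sup>2)\<close> by simp
  have "(\<integral>\<omega>. (norm (\<Sum>i<b t. e i \<omega>))\<^sup>2 \<partial>M) \<le> real (b t) * \<sigma>\<^sup>2"
    unfolding sum_variance using sum_mono[of "{..<b t}", OF moments(4)] by simp
  then show "(\<integral>\<omega>. (norm (batch_grad t x \<omega> - g x))\<^sup>2 \<partial>M) \<le> \<sigma>\<^sup>2 / real (b t)"
    unfolding scale using b_pos[of t] by (simp add: field_simps power2_eq_square)
qed

lemma integral_norm_step_squared:
  shows "integrable M (\<lambda>\<omega>. (norm (v - c *\<^sub>R batch_grad t x \<omega>))\<^sup>2)"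
    and "(\<integral>\<omega>. (norm (v - c *\<^sub>R batch_grad t x \<omega>))\<^sup>2 \<partial>M) \<le> (norm (v - c *\<^sub>R g x))\<^sup>2 + c\<^sup>2 * \<sigma>\<^sup>2 / real (b t)"
proof -
  let ?Y = "\<lambda>\<omega>. c *\<^sub>R batch_grad t x \<omega>"
  have mean: "integrable M ?Y" "(\<integral>\<omega>. ?Y \<omega> \<partial>M) = c *\<^sub>R g x"
    using batch_grad_mean by simp_all
  have deviation: "(norm (?Y \<omega> - c *\<^sub>R g x))\<^sup>2 = c\<^sup>2 * (norm (batch_grad t x \<omega> - g x))\<^sup>2" for \<omega>
    by (simp flip: scaleR_diff_right add: power_mult_distrib)
  have variance: "integrable M (\<lambda>\<omega>. (norm (?Y \<omega> - c *\<^sub>R g x))\<^sup>2)"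
    unfolding deviation using batch_grad_variance(1) by simp
  note bias_variance = M.integral_norm_squared_bias_variance[OF mean(1), unfolded mean(2), OF variance]
  have swap: "norm (v - w) = norm (w - v)" for w
    by (rule norm_minus_commute)
  show "integrable M (\<lambda>\<omega>. (norm (v - c *\<^sub>R batch_grad t x \<omega>))\<^sup>2)"
    unfolding swap by (rule bias_variance(1))
  have "(\<integral>\<omega>. (norm (v - c *\<^sub>R batch_grad t x \<omega>))\<^sup>2 \<partial>M)
      = (norm (v - c *\<^sub>R g x))\<^sup>2 + c\<^sup>2 * (\<integral>\<omega>. (norm (batch_grad t x \<omega> - g x))\<^sup>2 \<partial>M)"
    unfolding swap bias_variance(2) deviation by simp
  also have "\<dots> \<le> (norm (v - c *\<^sub>R g x))\<^sup>2 + c\<^sup>2 * (\<sigma>\<^sup>2 / real (b t))"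
    using batch_grad_variance(2) by (intro add_left_mono mult_left_mono) auto
  finally show "(\<integral>\<omega>. (norm (v - c *\<^sub>R batch_grad t x \<omega>))\<^sup>2 \<partial>M) \<le> (norm (v - c *\<^sub>R g x))\<^sup>2 + c\<^sup>2 * \<sigma>\<^sup>2 / real (b t)"
    by simp
qed

lemma distance_step:
  "(\<integral>\<^sup>+\<omega>. ennreal ((norm (x - \<eta> t *\<^sub>R batch_grad t x \<omega> - \<theta>s))\<^sup>2 + 2 * \<eta> t * (F x - F \<theta>s)) \<partial>M)
   \<le> ennreal ((norm (x - \<theta>s))\<^sup>2 + (\<eta> t)\<^sup>2 * (norm (g x))\<^sup>2 + (\<eta> t)\<^sup>2 * \<sigma>\<^sup>2 / real (b t))"
proof -
  have shift: "x - \<eta> t *\<^sub>R batch_grad t x \<omega> - \<theta>s = (x - \<theta>s) - \<eta> t *\<^sub>R batch_grad t x \<omega>" for \<omega>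
    by simp
  have gap: "0 \<le> 2 * \<eta> t * (F x - F \<theta>s)"
    using \<eta>_nonneg F_minimizer by simp
  have "(\<integral>\<^sup>+\<omega>. ennreal ((norm (x - \<eta> t *\<^sub>R batch_grad t x \<omega> - \<theta>s))\<^sup>2 + 2 * \<eta> t * (F x - F \<theta>s)) \<partial>M)
      \<le> ennreal (\<integral>\<omega>. (norm ((x - \<theta>s) - \<eta> t *\<^sub>R batch_grad t x \<omega>))\<^sup>2 + 2 * \<eta> t * (F x - F \<theta>s) \<partial>M)"
    unfolding shift using integral_norm_step_squared(1) gap by (intro nn_integral_le_integral) auto
  also have "\<dots> \<le> ennreal ((norm (x - \<theta>s))\<^sup>2 + (\<eta> t)\<^sup>2 * (norm (g x))\<^sup>2 + (\<eta> t)\<^sup>2 * \<sigma>\<^sup>2 / real (b t))"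
  proof (rule ennreal_leI)
    have "F x - F \<theta>s \<le> g x \<bullet> (x - \<theta>s)"
      using convex_on_gradient_inequality[OF F_deriv F_convex, where x = x and y = \<theta>s] by (simp add: inner_diff_right)
    then have "2 * \<eta> t * (F x - F \<theta>s) \<le> 2 * \<eta> t * (g x \<bullet> (x - \<theta>s))"
      using \<eta>_nonneg by (intro mult_left_mono) auto
    moreover have "(norm ((x - \<theta>s) - \<eta> t *\<^sub>R g x))\<^sup>2
        = (norm (x - \<theta>s))\<^sup>2 - 2 * \<eta> t * (g x \<bullet> (x - \<theta>s)) + (\<eta> t)\<^sup>2 * (norm (g x))\<^sup>2"
      by (simp only: power2_norm_eq_inner)
        (simp add: inner_diff_left inner_diff_right inner_commute power2_eq_square algebra_simps)
    ultimately show "(\<integral>\<omega>. (norm ((x - \<theta>s) - \<eta> t *\<^sub>R batch_grad t x \<omega>))\<^sup>2 + 2 * \<eta> t * (F x - F \<theta>s) \<partial>M)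
        \<le> (norm (x - \<theta>s))\<^sup>2 + (\<eta> t)\<^sup>2 * (norm (g x))\<^sup>2 + (\<eta> t)\<^sup>2 * \<sigma>\<^sup>2 / real (b t)"
      using integral_norm_step_squared[of "x - \<theta>s" "\<eta> t" t x] by (simp add: M.prob_space)
  qed
  finally show ?thesis .
qed

lemma descent_step:
  "(\<integral>\<^sup>+\<omega>. ennreal (F (x - \<eta> t *\<^sub>R batch_grad t x \<omega>) - F_low + \<eta> t * (1 - L * \<eta> t / 2) * (norm (g x))\<^sup>2) \<partial>M)
   \<le> ennreal (F x - F_low + L * (\<eta> t)\<^sup>2 * \<sigma>\<^sup>2 / (2 * real (b t)))"
proof -
  define q where "q = \<eta> t * (1 - L * \<eta> t / 2)"
  have q: "0 \<le> q"
    using \<eta>_nonneg[of t] L_mult_\<eta>_lt[of t] by (simp add: q_def)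
  define v where "v \<omega> = F x - F_low - \<eta> t * (g x \<bullet> batch_grad t x \<omega>)
      + L / 2 * (\<eta> t)\<^sup>2 * (norm (batch_grad t x \<omega>))\<^sup>2 + q * (norm (g x))\<^sup>2" for \<omega>
  have upper: "F (x - \<eta> t *\<^sub>R batch_grad t x \<omega>) - F_low + q * (norm (g x))\<^sup>2 \<le> v \<omega>" for \<omega>
    using lipschitz_gradient_upper_bound[OF F_deriv g_lipschitz, where x = x and y = "x - \<eta> t *\<^sub>R batch_grad t x \<omega>"]
    by (simp add: v_def power_mult_distrib)
  have lower: "0 \<le> F (x - \<eta> t *\<^sub>R batch_grad t x \<omega>) - F_low + q * (norm (g x))\<^sup>2" for \<omega>
    using F_lower q by (simp add: add_nonneg_nonneg)
  have second_moment: "integrable M (\<lambda>\<omega>. (norm (batch_grad t x \<omega>))\<^sup>2)"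
      "(\<integral>\<omega>. (norm (batch_grad t x \<omega>))\<^sup>2 \<partial>M) \<le> (norm (g x))\<^sup>2 + \<sigma>\<^sup>2 / real (b t)"
    using integral_norm_step_squared[of 0 1 t x] by simp_all
  have v: "integrable M v"
    unfolding v_def[abs_def] using batch_grad_mean second_moment by simp
  have "(\<integral>\<omega>. v \<omega> \<partial>M) = F x - F_low - \<eta> t * (norm (g x))\<^sup>2
      + L / 2 * (\<eta> t)\<^sup>2 * (\<integral>\<omega>. (norm (batch_grad t x \<omega>))\<^sup>2 \<partial>M) + q * (norm (g x))\<^sup>2"
    unfolding v_def using batch_grad_mean second_moment by (simp add: M.prob_space power2_norm_eq_inner)
  also have "\<dots> \<le> F x - F_low - \<eta> t * (norm (g x))\<^sup>2
      + L / 2 * (\<eta> t)\<^sup>2 * ((norm (g x))\<^sup>2 + \<sigma>\<^sup>2 / real (b t)) + q * (norm (g x))\<^sup>2"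
    using second_moment(2) L_nonneg by (intro add_mono mult_left_mono order.refl add_left_mono) auto
  also have "\<dots> = F x - F_low + L * (\<eta> t)\<^sup>2 * \<sigma>\<^sup>2 / (2 * real (b t))"
    by (simp add: q_def algebra_simps power2_eq_square)
  finally have "(\<integral>\<omega>. v \<omega> \<partial>M) \<le> F x - F_low + L * (\<eta> t)\<^sup>2 * \<sigma>\<^sup>2 / (2 * real (b t))" .
  moreover have "(\<integral>\<^sup>+\<omega>. ennreal (F (x - \<eta> t *\<^sub>R batch_grad t x \<omega>) - F_low + q * (norm (g x))\<^sup>2) \<partial>M)
      \<le> ennreal (\<integral>\<omega>. v \<omega> \<partial>M)"
    using v lower upper by (rule nn_integral_le_integral)
  ultimately show ?thesis
    unfolding q_def by (meson ennreal_leI order.trans)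
qed

(* Writing theta t as a function of the samples of the steps before t separates it from the batch
   of step t, which is independent of those samples. *)
definition samples :: "'m \<Rightarrow> nat \<times> nat \<Rightarrow> 'b" where
  "samples \<omega> p = (\<lambda>(t, i). X t i) p \<omega>"

definition past :: "nat \<Rightarrow> (nat \<times> nat) set" where
  "past t = {(s, i). s < t \<and> i < b s}"

definition batch :: "nat \<Rightarrow> (nat \<times> nat) set" where
  "batch t = {(s, i). s = t \<and> i < b t}"

primrec iterate :: "nat \<Rightarrow> (nat \<times> nat \<Rightarrow> 'b) \<Rightarrow> 'a" where
  "iterate 0 y = \<theta>0"
| "iterate (Suc t) y = iterate t y - \<eta> t *\<^sub>R ((\<Sum>i<b t. G (y (t, i)) (iterate t y)) /\<^sub>R real (b t))"

lemma iterate_cong: "(\<And>p. p \<in> past t \<Longrightarrow> y p = y' p) \<Longrightarrow> iterate t y = iterate t y'"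
proof (induction t)
  case 0
  then show ?case by simp
next
  case (Suc t)
  then have "iterate t y = iterate t y'"
    by (auto simp: past_def)
  moreover have "y (t, i) = y' (t, i)" if "i < b t" for i
    using Suc.prems that by (auto simp: past_def)
  ultimately show ?case
    by simp
qed

lemma \<theta>_eq_iterate: "\<theta> t \<omega> = iterate t (restrict (samples \<omega>) (past t))"
proof -
  have "\<theta> t \<omega> = iterate t (samples \<omega>)"
    by (induction t) (simp_all add: \<theta>_0 \<theta>_Suc samples_def)
  also have "\<dots> = iterate t (restrict (samples \<omega>) (past t))"
    by (rule iterate_cong) simp
  finally show ?thesis .
qed

lemma iterate_measurable: "s \<le> t \<Longrightarrow> iterate s \<in> borel_measurable (PiM (past t) (\<lambda>_. D))"
proof (induction s)
  case 0
  then show ?case by simp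
next
  case (Suc s)
  have "(\<lambda>y. y (s, i)) \<in> measurable (PiM (past t) (\<lambda>_. D)) D" if "i < b s" for i
    using Suc.prems that by (intro measurable_component_singleton) (auto simp: past_def)
  then show ?case
    using Suc by (simp add: sgd_step_measurable)
qed

lemma past_batch_indep:
  "M.indep_var (PiM (past t) (\<lambda>_. D)) (\<lambda>\<omega>. restrict (samples \<omega>) (past t))
     (PiM (batch t) (\<lambda>_. D)) (\<lambda>\<omega>. restrict (samples \<omega>) (batch t))"
  unfolding samples_def by (rule M.indep_var_restrict[OF X_indep]) (auto simp: past_def batch_def)

lemma nn_integral_step_le:
  fixes \<Phi> :: "'a \<Rightarrow> 'a \<Rightarrow> ennreal" and \<Psi> :: "'a \<Rightarrow> ennreal"
  assumes \<Phi>: "(\<lambda>p. \<Phi> (fst p) (snd p)) \<in> borel_measurable (borel \<Otimes>\<^sub>M borel)"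
    and step: "\<And>x. (\<integral>\<^sup>+\<omega>. \<Phi> x (x - \<eta> t *\<^sub>R batch_grad t x \<omega>) \<partial>M) \<le> \<Psi> x"
  shows "(\<integral>\<^sup>+\<omega>. \<Phi> (\<theta> t \<omega>) (\<theta> (Suc t) \<omega>) \<partial>M) \<le> (\<integral>\<^sup>+\<omega>. \<Psi> (\<theta> t \<omega>) \<partial>M)"
proof -
  let ?P = "PiM (past t) (\<lambda>_. D) \<Otimes>\<^sub>M PiM (batch t) (\<lambda>_. D)"
  define H where "H p = \<Phi> (iterate t (fst p))
      (iterate t (fst p) - \<eta> t *\<^sub>R ((\<Sum>i<b t. G (snd p (t, i)) (iterate t (fst p))) /\<^sub>R real (b t)))" for p
  have current: "(\<lambda>p. snd p (t, i)) \<in> measurable ?P D" if "i < b t" for i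
    using that by (intro measurable_compose[OF measurable_snd] measurable_component_singleton) (auto simp: batch_def)
  have previous: "(\<lambda>p. iterate t (fst p)) \<in> borel_measurable ?P"
    by (intro measurable_compose[OF measurable_fst] iterate_measurable) simp
  have "(\<lambda>p. (iterate t (fst p),
      iterate t (fst p) - \<eta> t *\<^sub>R ((\<Sum>i<b t. G (snd p (t, i)) (iterate t (fst p))) /\<^sub>R real (b t))))
      \<in> measurable ?P (borel \<Otimes>\<^sub>M borel)"
    by (intro measurable_Pair previous sgd_step_measurable current)
  from measurable_compose[OF this \<Phi>] have "H \<in> borel_measurable ?P"
    by (simp add: H_def[abs_def])
  then have "(\<integral>\<^sup>+\<omega>. H (restrict (samples \<omega>) (past t), restrict (samples \<omega>) (batch t)) \<partial>M)
      = (\<integral>\<^sup>+\<omega>. (\<integral>\<^sup>+\<omega>'. H (restrict (samples \<omega>) (past t), restrict (samples \<omega>') (batch t)) \<partial>M) \<partial>M)"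
    by (rule M.indep_var_nn_integral_iterated[OF past_batch_indep])
  moreover have "H (restrict (samples \<omega>) (past t), restrict (samples \<omega>') (batch t))
      = \<Phi> (\<theta> t \<omega>) (\<theta> t \<omega> - \<eta> t *\<^sub>R batch_grad t (\<theta> t \<omega>) \<omega>')" for \<omega> \<omega>'
    by (simp add: H_def \<theta>_eq_iterate batch_grad_def samples_def batch_def)
  ultimately have "(\<integral>\<^sup>+\<omega>. \<Phi> (\<theta> t \<omega>) (\<theta> (Suc t) \<omega>) \<partial>M)
      = (\<integral>\<^sup>+\<omega>. (\<integral>\<^sup>+\<omega>'. \<Phi> (\<theta> t \<omega>) (\<theta> t \<omega> - \<eta> t *\<^sub>R batch_grad t (\<theta> t \<omega>) \<omega>') \<partial>M) \<partial>M)"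
    by (simp add: \<theta>_Suc batch_grad_def)
  also have "\<dots> \<le> (\<integral>\<^sup>+\<omega>. \<Psi> (\<theta> t \<omega>) \<partial>M)"
    by (intro nn_integral_mono step)
  finally show ?thesis .
qed

lemma distance_nn_recurrence:
  "(\<integral>\<^sup>+\<omega>. ennreal ((norm (\<theta> (Suc t) \<omega> - \<theta>s))\<^sup>2 + 2 * \<eta> t * (F (\<theta> t \<omega>) - F \<theta>s)) \<partial>M)
   \<le> (\<integral>\<^sup>+\<omega>. ennreal ((norm (\<theta> t \<omega> - \<theta>s))\<^sup>2 + (\<eta> t)\<^sup>2 * (norm (g (\<theta> t \<omega>)))\<^sup>2 + (\<eta> t)\<^sup>2 * \<sigma>\<^sup>2 / real (b t)) \<partial>M)"
  by (rule nn_integral_step_le[where \<Phi> = "\<lambda>x y. ennreal ((norm (y - \<theta>s))\<^sup>2 + 2 * \<eta> t * (F x - F \<theta>s))"])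
    (measurable, rule distance_step)

lemma descent_nn_recurrence:
  "(\<integral>\<^sup>+\<omega>. ennreal (F (\<theta> (Suc t) \<omega>) - F_low + \<eta> t * (1 - L * \<eta> t / 2) * (norm (g (\<theta> t \<omega>)))\<^sup>2) \<partial>M)
   \<le> (\<integral>\<^sup>+\<omega>. ennreal (F (\<theta> t \<omega>) - F_low + L * (\<eta> t)\<^sup>2 * \<sigma>\<^sup>2 / (2 * real (b t))) \<partial>M)"
  by (rule nn_integral_step_le[where \<Phi> = "\<lambda>x y. ennreal (F y - F_low + \<eta> t * (1 - L * \<eta> t / 2) * (norm (g x))\<^sup>2)"])
    (measurable, rule descent_step)

lemma integrable_of_distance:
  assumes distance: "integrable M (\<lambda>\<omega>. (norm (\<theta> t \<omega> - \<theta>s))\<^sup>2)"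
  shows "integrable M (\<lambda>\<omega>. (norm (g (\<theta> t \<omega>)))\<^sup>2)" and "integrable M (\<lambda>\<omega>. F (\<theta> t \<omega>) - F \<theta>s)"
proof -
  show "integrable M (\<lambda>\<omega>. (norm (g (\<theta> t \<omega>)))\<^sup>2)"
  proof (rule Bochner_Integration.integrable_bound)
    show "integrable M (\<lambda>\<omega>. L\<^sup>2 * (norm (\<theta> t \<omega> - \<theta>s))\<^sup>2)"
      using distance by simp
    show "AE \<omega> in M. norm ((norm (g (\<theta> t \<omega>)))\<^sup>2) \<le> norm (L\<^sup>2 * (norm (\<theta> t \<omega> - \<theta>s))\<^sup>2)"
      using gradient_norm_bound by (intro AE_I2) simp
  qed measurable
  show "integrable M (\<lambda>\<omega>. F (\<theta> t \<omega>) - F \<theta>s)"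
  proof (rule Bochner_Integration.integrable_bound)
    show "integrable M (\<lambda>\<omega>. L / 2 * (norm (\<theta> t \<omega> - \<theta>s))\<^sup>2)"
      using distance by simp
    show "AE \<omega> in M. norm (F (\<theta> t \<omega>) - F \<theta>s) \<le> norm (L / 2 * (norm (\<theta> t \<omega> - \<theta>s))\<^sup>2)"
      using gap_bound F_minimizer L_nonneg by (intro AE_I2) simp
  qed measurable
qed

(* The one-step bounds live in ennreal, so no integrability of the iterates has to be assumed;
   it follows from the distance recurrence by induction. *)
lemma integrable_distance: "integrable M (\<lambda>\<omega>. (norm (\<theta> t \<omega> - \<theta>s))\<^sup>2)"
proof (induction t)
  case 0
  then show ?case by (simp add: \<theta>_0)
next
  case (Suc t)
  define R where "R \<omega> = (norm (\<theta> t \<omega> - \<theta>s))\<^sup>2 + (\<eta> t)\<^sup>2 * (norm (g (\<theta> t \<omega>)))\<^sup>2 + (\<eta> t)\<^sup>2 * \<sigma>\<^sup>2 / real (b t)" for \<omega>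
  have "(\<integral>\<^sup>+\<omega>. ennreal ((norm (\<theta> (Suc t) \<omega> - \<theta>s))\<^sup>2) \<partial>M)
      \<le> (\<integral>\<^sup>+\<omega>. ennreal ((norm (\<theta> (Suc t) \<omega> - \<theta>s))\<^sup>2 + 2 * \<eta> t * (F (\<theta> t \<omega>) - F \<theta>s)) \<partial>M)"
    using \<eta>_nonneg F_minimizer by (intro nn_integral_mono ennreal_leI) auto
  also have "\<dots> \<le> (\<integral>\<^sup>+\<omega>. ennreal (R \<omega>) \<partial>M)"
    unfolding R_def by (rule distance_nn_recurrence)
  also have "\<dots> = ennreal (\<integral>\<omega>. R \<omega> \<partial>M)"
    unfolding R_def using Suc integrable_of_distance(1)[OF Suc]
    by (intro nn_integral_eq_integral) auto
  finally show ?case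
    by (intro integrableI_nonneg) (auto simp: top.not_eq_extremum order.strict_trans1)
qed

lemmas integrable_gradient = integrable_of_distance(1)[OF integrable_distance]
  and integrable_gap = integrable_of_distance(2)[OF integrable_distance]

lemma distance_recurrence:
  "(\<integral>\<omega>. (norm (\<theta> (Suc t) \<omega> - \<theta>s))\<^sup>2 \<partial>M) + 2 * \<eta> t * (\<integral>\<omega>. F (\<theta> t \<omega>) - F \<theta>s \<partial>M)
   \<le> (\<integral>\<omega>. (norm (\<theta> t \<omega> - \<theta>s))\<^sup>2 \<partial>M) + (\<eta> t)\<^sup>2 * (\<integral>\<omega>. (norm (g (\<theta> t \<omega>)))\<^sup>2 \<partial>M)
     + (\<eta> t)\<^sup>2 * \<sigma>\<^sup>2 / real (b t)"
proof -
  have "(\<integral>\<omega>. (norm (\<theta> (Suc t) \<omega> - \<theta>s))\<^sup>2 + 2 * \<eta> t * (F (\<theta> t \<omega>) - F \<theta>s) \<partial>M)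
      \<le> (\<integral>\<omega>. (norm (\<theta> t \<omega> - \<theta>s))\<^sup>2 + (\<eta> t)\<^sup>2 * (norm (g (\<theta> t \<omega>)))\<^sup>2 + (\<eta> t)\<^sup>2 * \<sigma>\<^sup>2 / real (b t) \<partial>M)"
    using integrable_distance integrable_gradient integrable_gap \<eta>_nonneg F_minimizer
    by (intro integral_mono_of_nn_integral_le distance_nn_recurrence) auto
  then show ?thesis
    using integrable_distance integrable_gradient integrable_gap by (simp add: M.prob_space)
qed

lemma descent_recurrence:
  "(\<integral>\<omega>. F (\<theta> (Suc t) \<omega>) - F_low \<partial>M) + \<eta> t * (1 - L * \<eta> t / 2) * (\<integral>\<omega>. (norm (g (\<theta> t \<omega>)))\<^sup>2 \<partial>M)
   \<le> (\<integral>\<omega>. F (\<theta> t \<omega>) - F_low \<partial>M) + L * (\<eta> t)\<^sup>2 * \<sigma>\<^sup>2 / (2 * real (b t))"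
proof -
  have excess: "integrable M (\<lambda>\<omega>. F (\<theta> s \<omega>) - F_low)" for s
  proof -
    have "integrable M (\<lambda>\<omega>. (F (\<theta> s \<omega>) - F \<theta>s) + (F \<theta>s - F_low))"
      using integrable_gap[of s] by (intro Bochner_Integration.integrable_add) auto
    then show ?thesis
      by simp
  qed
  have "(\<integral>\<omega>. F (\<theta> (Suc t) \<omega>) - F_low + \<eta> t * (1 - L * \<eta> t / 2) * (norm (g (\<theta> t \<omega>)))\<^sup>2 \<partial>M)
      \<le> (\<integral>\<omega>. F (\<theta> t \<omega>) - F_low + L * (\<eta> t)\<^sup>2 * \<sigma>\<^sup>2 / (2 * real (b t)) \<partial>M)"
    using excess integrable_gradient F_lower \<eta>_nonneg[of t] L_mult_\<eta>_lt[of t] L_nonneg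
    by (intro integral_mono_of_nn_integral_le descent_nn_recurrence) (auto intro!: add_nonneg_nonneg)
  then show ?thesis
    using excess integrable_gradient by (simp add: M.prob_space)
qed

theorem min_expected_gap_le:
  assumes "(\<Sum>t<T. \<eta> t) \<noteq> 0"
  shows "Min ((\<lambda>t. \<integral>\<omega>. F (\<theta> t \<omega>) - F \<theta>s \<partial>M) ` {..<T})
    \<le> ((norm (\<theta>0 - \<theta>s))\<^sup>2 / 2 + \<eta>max * (F \<theta>0 - F_low) / (2 - L * \<eta>max)) * (1 / (\<Sum>t<T. \<eta> t))
     + \<sigma>\<^sup>2 / 2 * (1 + L * \<eta>max / (2 - L * \<eta>max)) * ((\<Sum>t<T. (\<eta> t)\<^sup>2 / real (b t)) / (\<Sum>t<T. \<eta> t))"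
proof -
  have "Min ((\<lambda>t. \<integral>\<omega>. F (\<theta> t \<omega>) - F \<theta>s \<partial>M) ` {..<T})
    \<le> ((\<integral>\<omega>. (norm (\<theta> 0 \<omega> - \<theta>s))\<^sup>2 \<partial>M) / 2 + \<eta>max * (\<integral>\<omega>. F (\<theta> 0 \<omega>) - F_low \<partial>M) / (2 - L * \<eta>max))
        * (1 / (\<Sum>t<T. \<eta> t))
     + \<sigma>\<^sup>2 / 2 * (1 + L * \<eta>max / (2 - L * \<eta>max)) * ((\<Sum>t<T. (\<eta> t)\<^sup>2 / real (b t)) / (\<Sum>t<T. \<eta> t))"
    by (rule sgd_rate_from_recurrences[where a = "\<lambda>t. \<integral>\<omega>. (norm (\<theta> t \<omega> - \<theta>s))\<^sup>2 \<partial>M"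
          and q = "\<lambda>t. \<integral>\<omega>. (norm (g (\<theta> t \<omega>)))\<^sup>2 \<partial>M" and e = "\<lambda>t. \<integral>\<omega>. F (\<theta> t \<omega>) - F_low \<partial>M"
          and B = "\<lambda>t. real (b t)",
          OF L_nonneg step_size \<eta>_nonneg \<eta>_le_max _ _ _ distance_recurrence descent_recurrence assms])
      (auto intro!: integral_nonneg simp: F_lower)
  then show ?thesis
    by (simp add: \<theta>_0 M.prob_space)
qed

end

theorem lemma2:
  fixes n :: nat
    and fs :: "nat \<Rightarrow> 'a::euclidean_space \<Rightarrow> real"
    and gfs :: "nat \<Rightarrow> 'a \<Rightarrow> 'a"
    and L :: "nat \<Rightarrow> real"
    and D :: "'b measure"
    and G :: "'b \<Rightarrow> 'a \<Rightarrow> 'a"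
    and \<sigma> :: real
    and M :: "'m measure"
    and X :: "nat \<Rightarrow> nat \<Rightarrow> 'm \<Rightarrow> 'b"
    and b :: "nat \<Rightarrow> nat"
    and \<eta> :: "nat \<Rightarrow> real"
    and \<eta>min \<eta>max :: real
    and \<theta> :: "nat \<Rightarrow> 'm \<Rightarrow> 'a"
    and \<theta>0 \<theta>s :: 'a
    and T :: nat
  assumes n_pos: "n \<ge> 1"
    \<comment> \<open>(A1)\<close>
    and grad: "\<And>i x. i < n \<Longrightarrow> (fs i has_derivative (\<lambda>h. gfs i x \<bullet> h)) (at x)"
    and L_pos: "\<And>i. i < n \<Longrightarrow> L i > 0"
    and smooth: "\<And>i x y. i < n \<Longrightarrow> norm (gfs i x - gfs i y) \<le> L i * norm (x - y)"
    and bdd: "\<And>i. i < n \<Longrightarrow> bdd_below (range (fs i))"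
    \<comment> \<open>(A2)\<close>
    and probD: "prob_space D"
    and G_meas: "(\<lambda>(\<xi>, x). G \<xi> x) \<in> borel_measurable (D \<Otimes>\<^sub>M borel)"
    and G_int: "\<And>x. integrable D (\<lambda>\<xi>. G \<xi> x)"
    and G_unbiased: "\<And>x. (\<integral>\<xi>. G \<xi> x \<partial>D) = (\<Sum>i<n. gfs i x) /\<^sub>R real n"
    and G_var_int: "\<And>x. integrable D (\<lambda>\<xi>. (norm (G \<xi> x - (\<Sum>i<n. gfs i x) /\<^sub>R real n))\<^sup>2)"
    and G_var: "\<And>x. (\<integral>\<xi>. (norm (G \<xi> x - (\<Sum>i<n. gfs i x) /\<^sub>R real n))\<^sup>2 \<partial>D) \<le> \<sigma>\<^sup>2"
    and \<sigma>_nonneg: "\<sigma> \<ge> 0"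
    \<comment> \<open>(A3) and mini-batch SGD: i.i.d. draws X t i, i < b t, all independent\<close>
    and probM: "prob_space M"
    and indep: "prob_space.indep_vars M (\<lambda>_. D) (\<lambda>(t, i). X t i) {(t, i). i < b t}"
    and distrX: "\<And>t i. i < b t \<Longrightarrow> distr M D (X t i) = D"
    and b_pos: "\<And>t. b t \<ge> 1"
    and \<theta>_0: "\<And>\<omega>. \<theta> 0 \<omega> = \<theta>0"
    and \<theta>_Suc: "\<And>t \<omega>. \<theta> (Suc t) \<omega> =
        \<theta> t \<omega> - \<eta> t *\<^sub>R ((\<Sum>i<b t. G (X t i \<omega>) (\<theta> t \<omega>)) /\<^sub>R real (b t))"
    \<comment> \<open>learning rates\<close>
    and \<eta>min_nonneg: "0 \<le> \<eta>min"
    and \<eta>_range: "\<And>t. \<eta>min \<le> \<eta> t \<and> \<eta> t \<le> \<eta>max"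
    and \<eta>max_lt: "\<eta>max < 2 / ((\<Sum>i<n. L i) / real n)"
    \<comment> \<open>convexity and minimizer\<close>
    and convex: "convex_on UNIV (avg_fun n fs)"
    and minimizer: "\<And>x. avg_fun n fs \<theta>s \<le> avg_fun n fs x"
    and sum_ne: "(\<Sum>t<T. \<eta> t) \<noteq> 0"
  shows "Min ((\<lambda>t. \<integral>\<omega>. (avg_fun n fs (\<theta> t \<omega>) - avg_fun n fs \<theta>s) \<partial>M) ` {..<T})
    \<le> ((norm (\<theta>0 - \<theta>s))\<^sup>2 / 2
         + \<eta>max * (avg_fun n fs \<theta>0 - avg_inf n fs) / (2 - ((\<Sum>i<n. L i) / real n) * \<eta>max))
       * (1 / (\<Sum>t<T. \<eta> t))
     + \<sigma>\<^sup>2 / 2 * (1 + ((\<Sum>i<n. L i) / real n) * \<eta>max / (2 - ((\<Sum>i<n. L i) / real n) * \<eta>max))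
       * ((\<Sum>t<T. (\<eta> t)\<^sup>2 / real (b t)) / (\<Sum>t<T. \<eta> t))"
proof -
  have L_avg_pos: "0 < (\<Sum>i<n. L i) / real n"
    using n_pos L_pos by (intro divide_pos_pos sum_pos) (auto simp: lessThan_empty_iff)
  have "\<And>t. 0 < b t" and "\<And>t. 0 \<le> \<eta> t" and "\<And>t. \<eta> t \<le> \<eta>max"
    using b_pos \<eta>min_nonneg \<eta>_range by (auto intro: order.trans less_le_trans)
  moreover have "(\<Sum>i<n. L i) / real n * \<eta>max < 2"
    using \<eta>max_lt unfolding pos_less_divide_eq[OF L_avg_pos] by (simp only: mult.commute)
  ultimately have "minibatch_sgd (avg_fun n fs) (\<lambda>x. (\<Sum>i<n. gfs i x) /\<^sub>R real n) ((\<Sum>i<n. L i) / real n)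
      (avg_inf n fs) D G \<sigma> M X b \<eta> \<eta>max \<theta> \<theta>0 \<theta>s"
    using convex minimizer probD G_meas G_int G_unbiased G_var_int G_var probM indep distrX \<theta>_0 \<theta>_Suc
    by (intro minibatch_sgd.intro avg_fun_has_derivative avg_gradient_lipschitz avg_inf_le_avg_fun grad smooth bdd)
      assumption+
  then show ?thesis
    by (rule minibatch_sgd.min_expected_gap_le[OF _ sum_ne])
qed

end
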